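(* Let $Q$ be a non-negative (twice differentiable) function on $[0,\infty)$ satisfying $xQ''(x)+\beta Q'(x)\le0$, where $\beta\ge0$ is a constant. Then $Q$ is increasing if $0\le\beta<1$, decreasing if $\beta>1$, and constant if $\beta=1$. *)

theory Defs
  imports Complex_Main
begin

end

theory Submission
  imports Defs "HOL-Real_Asymp.Real_Asymp"
begin

text \<open>The weighted derivative \<open>x\<^sup>\<beta> Q'(x)\<close> has derivative \<open>x\<^sup>\<beta>\<^sup>-\<^sup>1 (x Q''(x) + \<beta> Q'(x)) \<le> 0\<close>,
  so it is nonincreasing on \<open>(0,\<infinity>)\<close>. If \<open>\<beta> > 0\<close> it tends to \<open>0\<close> at \<open>0\<close>, hence \<open>Q' \<le> 0\<close>.
  If \<open>\<beta> \<le> 1\<close> and \<open>c = a\<^sup>\<beta> Q'(a) < 0\<close> for some \<open>a > 0\<close>, then \<open>Q'(x) \<le> c x\<^sup>-\<^sup>\<beta> \<le> c / x\<close> for large \<open>x\<close>,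
  so \<open>Q\<close> decreases at least like \<open>c ln x \<rightarrow> -\<infinity>\<close>, contradicting \<open>Q \<ge> 0\<close>; hence \<open>Q' \<ge> 0\<close>.
  For \<open>\<beta> = 1\<close> both conclusions hold.\<close>

lemma has_real_derivative_at_if_within_atLeast:
  fixes f :: "real \<Rightarrow> real"
  assumes "(f has_real_derivative D) (at x within {a..})" "x > a"
  shows "(f has_real_derivative D) (at x)"
proof -
  have "(f has_real_derivative D) (at x within {a<..})"
    using assms(1) by (rule has_field_derivative_subset) auto
  then show ?thesis
    by (simp only: at_within_open[OF _ open_greaterThan] greaterThan_iff assms(2))
qed

lemma eq_if_mono_on_antimono_on:
  fixes f :: "'a :: linorder \<Rightarrow> 'b :: order"
  assumes "mono_on S f" "antimono_on S f" "x \<in> S" "y \<in> S"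
  shows "f x = f y"
  using assms linorder_le_cases[of x y] by (metis antisym monotone_onD)

lemma mono_on_atLeast_if_deriv_nonneg:
  fixes f f' :: "real \<Rightarrow> real"
  assumes "continuous_on {a..} f"
    and "\<And>x. x > a \<Longrightarrow> (f has_real_derivative f' x) (at x)"
    and "\<And>x. x > a \<Longrightarrow> f' x \<ge> 0"
  shows "mono_on {a..} f"
proof (rule mono_onI)
  fix r s :: real
  assume "r \<in> {a..}" "r \<le> s"
  show "f r \<le> f s"
  proof (rule DERIV_nonneg_imp_increasing_open[OF \<open>r \<le> s\<close>])
    fix x
    assume "r < x" "x < s"
    with \<open>r \<in> {a..}\<close> show "\<exists>y. (f has_real_derivative y) (at x) \<and> y \<ge> 0"
      using assms(2,3) by force
  next
    show "continuous_on {r..s} f"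
      using assms(1) by (rule continuous_on_subset) (use \<open>r \<in> {a..}\<close> in auto)
  qed
qed

lemma antimono_on_atLeast_if_deriv_nonpos:
  fixes f f' :: "real \<Rightarrow> real"
  assumes "continuous_on {a..} f"
    and "\<And>x. x > a \<Longrightarrow> (f has_real_derivative f' x) (at x)"
    and "\<And>x. x > a \<Longrightarrow> f' x \<le> 0"
  shows "antimono_on {a..} f"
proof -
  have "mono_on {a..} (\<lambda>x. - f x)"
    using assms by (intro mono_on_atLeast_if_deriv_nonneg[where f' = "\<lambda>x. - f' x"])
      (auto intro: continuous_on_minus derivative_intros)
  then show ?thesis
    by (auto simp: monotone_on_def)
qed

lemma filterlim_at_bot_if_deriv_le_neg_inverse:
  fixes f f' :: "real \<Rightarrow> real"
  assumes "b > 0" "c < 0"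
    and deriv: "\<And>x. x \<ge> b \<Longrightarrow> (f has_real_derivative f' x) (at x)"
    and bound: "\<And>x. x \<ge> b \<Longrightarrow> f' x \<le> c / x"
  shows "filterlim f at_bot at_top"
proof (rule filterlim_at_bot_mono)
  show "filterlim (\<lambda>x. f b + c * (ln x - ln b)) at_bot at_top"
    using \<open>c < 0\<close> by real_asymp
  show "eventually (\<lambda>x. f x \<le> f b + c * (ln x - ln b)) at_top"
    using eventually_ge_at_top[of b]
  proof eventually_elim
    case (elim x)
    have "f x - c * ln x \<le> f b - c * ln b"
    proof (rule deriv_nonpos_imp_antimono[OF _ _ elim])
      fix y assume "y \<in> {b..x}"
      with \<open>b > 0\<close> show "((\<lambda>x. f x - c * ln x) has_real_derivative f' y - c / y) (at y)"
        by (auto intro!: derivative_eq_intros deriv simp: field_simps)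
      show "f' y - c / y \<le> 0"
        using bound \<open>y \<in> {b..x}\<close> by simp
    qed
    then show ?case
      by (simp add: algebra_simps)
  qed
qed

lemma antimono_on_powr_mult_if_deriv_ineq:
  fixes f f' :: "real \<Rightarrow> real"
  assumes deriv: "\<And>x. x > 0 \<Longrightarrow> (f has_real_derivative f' x) (at x)"
    and ineq: "\<And>x. x > 0 \<Longrightarrow> x * f' x + \<beta> * f x \<le> 0"
  shows "antimono_on {0<..} (\<lambda>x. x powr \<beta> * f x)"
proof (rule monotone_onI)
  fix r s :: real
  assume "r \<in> {0<..}" "r \<le> s"
  show "s powr \<beta> * f s \<le> r powr \<beta> * f r"
  proof (rule deriv_nonpos_imp_antimono[OF _ _ \<open>r \<le> s\<close>])
    fix x assume "x \<in> {r..s}"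
    with \<open>r \<in> {0<..}\<close> have "x > 0" by simp
    have "x powr \<beta> = x powr (\<beta> - 1) * x"
      using \<open>x > 0\<close> by (simp add: powr_diff)
    then have "\<beta> * x powr (\<beta> - 1) * f x + x powr \<beta> * f' x
        = x powr (\<beta> - 1) * (x * f' x + \<beta> * f x)"
      by (simp add: algebra_simps)
    moreover have "((\<lambda>x. x powr \<beta> * f x) has_real_derivative
        \<beta> * x powr (\<beta> - 1) * f x + x powr \<beta> * f' x) (at x)"
      using \<open>x > 0\<close> by (auto intro!: derivative_eq_intros deriv)
    ultimately show "((\<lambda>x. x powr \<beta> * f x) has_real_derivative
        x powr (\<beta> - 1) * (x * f' x + \<beta> * f x)) (at x)"
      by simp
    show "x powr (\<beta> - 1) * (x * f' x + \<beta> * f x) \<le> 0"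
      using ineq[OF \<open>x > 0\<close>] by (simp add: mult_nonneg_nonpos)
  qed
qed

lemma nonpos_if_deriv_ineq:
  fixes f f' :: "real \<Rightarrow> real"
  assumes "\<beta> > 0" and lim: "(f \<longlongrightarrow> l) (at_right 0)"
    and deriv: "\<And>x. x > 0 \<Longrightarrow> (f has_real_derivative f' x) (at x)"
    and ineq: "\<And>x. x > 0 \<Longrightarrow> x * f' x + \<beta> * f x \<le> 0"
    and "a > 0"
  shows "f a \<le> 0"
proof -
  have "((\<lambda>x. x powr \<beta> * f x) \<longlongrightarrow> 0 * l) (at_right 0)"
    using \<open>\<beta> > 0\<close> lim by (intro tendsto_mult) real_asymp+
  moreover have "eventually (\<lambda>x. a powr \<beta> * f a \<le> x powr \<beta> * f x) (at_right 0)"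
    unfolding eventually_at_right_field
  proof (intro exI[of _ a] conjI allI impI)
    fix x :: real
    assume "0 < x" "x < a"
    then show "a powr \<beta> * f a \<le> x powr \<beta> * f x"
      by (intro monotone_onD[OF antimono_on_powr_mult_if_deriv_ineq[OF deriv ineq]]) auto
  qed (use \<open>a > 0\<close> in simp)
  ultimately have "a powr \<beta> * f a \<le> 0"
    by (auto dest: tendsto_lowerbound)
  then show ?thesis
    using \<open>a > 0\<close> by (simp add: mult_le_0_iff)
qed

lemma nonneg_if_deriv_ineq:
  fixes F f f' :: "real \<Rightarrow> real"
  assumes "\<beta> \<le> 1"
    and F_deriv: "\<And>x. x > 0 \<Longrightarrow> (F has_real_derivative f x) (at x)"
    and deriv: "\<And>x. x > 0 \<Longrightarrow> (f has_real_derivative f' x) (at x)"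
    and ineq: "\<And>x. x > 0 \<Longrightarrow> x * f' x + \<beta> * f x \<le> 0"
    and F_bound: "\<And>x. x > 0 \<Longrightarrow> m \<le> F x"
    and "a > 0"
  shows "f a \<ge> 0"
proof (rule ccontr)
  assume "\<not> f a \<ge> 0"
  define c where "c = a powr \<beta> * f a"
  have "c < 0"
    using \<open>\<not> f a \<ge> 0\<close> \<open>a > 0\<close> by (simp add: c_def mult_pos_neg)
  have f_bound: "f x \<le> c / x" if "x \<ge> max a 1" for x
  proof -
    have "x > 0" "x \<ge> 1"
      using that \<open>a > 0\<close> by auto
    have "x powr \<beta> * f x \<le> c"
      unfolding c_def using that \<open>a > 0\<close>
      by (intro monotone_onD[OF antimono_on_powr_mult_if_deriv_ineq[OF deriv ineq]]) auto
    then have "f x \<le> c * x powr - \<beta>"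
      using \<open>x > 0\<close> by (simp add: powr_minus field_simps)
    also have "\<dots> \<le> c * x powr - 1"
      using \<open>c < 0\<close> \<open>x \<ge> 1\<close> \<open>\<beta> \<le> 1\<close> by (intro mult_left_mono_neg powr_mono) auto
    finally show ?thesis
      using \<open>x > 0\<close> by (simp add: powr_minus divide_inverse)
  qed
  have "filterlim F at_bot at_top"
    using \<open>a > 0\<close> \<open>c < 0\<close> F_deriv f_bound
    by (intro filterlim_at_bot_if_deriv_le_neg_inverse[of "max a 1" c F f]) auto
  then have "eventually (\<lambda>x. F x < m) at_top"
    by (simp add: filterlim_at_bot_dense)
  moreover have "eventually (\<lambda>x. m \<le> F x) at_top"
    using eventually_gt_at_top[of 0] by eventually_elim (rule F_bound)
  ultimately have "eventually (\<lambda>x::real. False) at_top"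
    by eventually_elim simp
  then show False
    by simp
qed

theorem lemma19:
  fixes Q Q' Q'' :: "real \<Rightarrow> real" and \<beta> :: real
  assumes beta_nonneg: "\<beta> \<ge> 0"
    and Q_nonneg: "\<And>x. x \<ge> 0 \<Longrightarrow> Q x \<ge> 0"
    and Q_deriv: "\<And>x. x \<ge> 0 \<Longrightarrow> (Q has_real_derivative Q' x) (at x within {0..})"
    and Q'_deriv: "\<And>x. x \<ge> 0 \<Longrightarrow> (Q' has_real_derivative Q'' x) (at x within {0..})"
    and ineq: "\<And>x. x \<ge> 0 \<Longrightarrow> x * Q'' x + \<beta> * Q' x \<le> 0"
  shows "(\<beta> < 1 \<longrightarrow> mono_on {0..} Q)
       \<and> (\<beta> > 1 \<longrightarrow> antimono_on {0..} Q)
       \<and> (\<beta> = 1 \<longrightarrow> (\<forall>x y. 0 \<le> x \<longrightarrow> 0 \<le> y \<longrightarrow> Q x = Q y))"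
proof -
  have Q_deriv_at: "(Q has_real_derivative Q' x) (at x)" if "x > 0" for x
    using that by (intro has_real_derivative_at_if_within_atLeast[OF Q_deriv]) auto
  have Q'_deriv_at: "(Q' has_real_derivative Q'' x) (at x)" if "x > 0" for x
    using that by (intro has_real_derivative_at_if_within_atLeast[OF Q'_deriv]) auto
  have ineq_pos: "x * Q'' x + \<beta> * Q' x \<le> 0" if "x > 0" for x
    using ineq that by simp
  have Q_cont: "continuous_on {0..} Q"
    using Q_deriv by (auto simp: continuous_on_eq_continuous_within intro: DERIV_continuous)
  have "(Q' \<longlongrightarrow> Q' 0) (at 0 within {0..})"
    using DERIV_continuous[OF Q'_deriv[of 0]] by (simp add: continuous_within)
  then have Q'_lim: "(Q' \<longlongrightarrow> Q' 0) (at_right 0)"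
    by (rule tendsto_within_subset) auto
  have Q'_nonpos: "Q' x \<le> 0" if "\<beta> > 0" "x > 0" for x
    by (rule nonpos_if_deriv_ineq[OF that(1) Q'_lim Q'_deriv_at ineq_pos that(2)])
  have Q'_nonneg: "Q' x \<ge> 0" if "\<beta> \<le> 1" "x > 0" for x
    by (rule nonneg_if_deriv_ineq[where m = 0, OF that(1) Q_deriv_at Q'_deriv_at ineq_pos _ that(2)])
      (auto intro: Q_nonneg)
  have antimono: "antimono_on {0..} Q" if "\<beta> > 0"
    by (rule antimono_on_atLeast_if_deriv_nonpos[OF Q_cont Q_deriv_at Q'_nonpos[OF that]])
  have mono: "mono_on {0..} Q" if "\<beta> \<le> 1"
    by (rule mono_on_atLeast_if_deriv_nonneg[OF Q_cont Q_deriv_at Q'_nonneg[OF that]])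
  have "Q x = Q y" if "\<beta> = 1" "0 \<le> x" "0 \<le> y" for x y
    using that by (intro eq_if_mono_on_antimono_on[OF mono antimono]) auto
  then show ?thesis
    using mono[OF less_imp_le] antimono[OF less_trans[OF zero_less_one]] by blast
qed

end
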